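(* For nonzero integers $n$ define $r(n)=\prod_{p\mid n\text{ prime}}\frac{-p^{4-3\operatorname{ord}_p(n)}}{p^3-p-1}$, and let $S=\prod_{p\text{ prime}}(1-p/(p^3-1))$. For $n\ge1$ put $$S_{1,n}=\sum_{i\ge1}\sum_{\substack{j\ge1\\ n\mid ij}}\frac{\mu(j)}{i^2j\varphi(ij)},\qquad S'_{2,n}=\sum_{\substack{i\ge1\\ 2\mid i}}\ \sum_{\substack{j\ge1\\ n\mid ij}}\frac{\mu(j)}{i^2j\,\varphi(ij)}.$$ Then $S_{1,n}=r(n)S$, and $S'_{2,n}=\frac{3}{10}r(n)S$ if $n$ is odd, while $S'_{2,n}=r(n)S$ if $4\mid n$.
   Context: $\mu$ is the Möbius function, $\varphi$ Euler's totient function, and $\operatorname{ord}_p(n)$ the exponent of the prime $p$ in $n$. *)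

theory Defs
  imports "HOL-Analysis.Analysis" "HOL-Number_Theory.Number_Theory"
    "HOL-Computational_Algebra.Squarefree"
begin

definition moebius_mu :: "nat \<Rightarrow> int" where
  "moebius_mu n = (if n = 0 \<or> \<not> squarefree n then 0 else (-1) ^ card (prime_factors n))"

definition r_fun :: "int \<Rightarrow> real" where
  "r_fun n = (\<Prod>p\<in>prime_factors n.
      - (real_of_int p powi (4 - 3 * int (multiplicity p n))) / (real_of_int p ^ 3 - real_of_int p - 1))"

definition S_const :: real where
  "S_const = (\<Prod>p. if prime (p::nat) then 1 - real p / (real p ^ 3 - 1) else 1)"

definition S1 :: "nat \<Rightarrow> real" where
  "S1 n = (\<Sum>\<^sub>\<infinity>i\<in>{i::nat. i \<ge> 1}.
             \<Sum>\<^sub>\<infinity>j\<in>{j::nat. j \<ge> 1 \<and> n dvd i * j}.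
               real_of_int (moebius_mu j) / (real i ^ 2 * real j * real (totient (i * j))))"

definition S2' :: "nat \<Rightarrow> real" where
  "S2' n = (\<Sum>\<^sub>\<infinity>i\<in>{i::nat. i \<ge> 1 \<and> even i}.
             \<Sum>\<^sub>\<infinity>j\<in>{j::nat. j \<ge> 1 \<and> n dvd i * j}.
               real_of_int (moebius_mu j) / (real i ^ 2 * real j * real (totient (i * j))))"

end

theory Submission
  imports Defs
begin

(* The summand mu(j) / (i^2 j phi(ij)) of S_{1,n} and S'_{2,n}, restricted by n | ij (and by 2 | i),
   is a product over the primes p of a factor depending only on the exponents a, b, e of p in i, j, n:
   mu(j) = (-1)^omega(j) on squarefree j, and phi(ij) = prod_p phi(p^(a+b)).  Summing over the pairs
   whose prime factors lie in a finite set of primes therefore gives a finite Euler product of local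
   sums, each a combination of two geometric series in p^-3.  The local sum equals 1 - p/(p^3-1)
   times the p-part of r(n), times 3/10 at p = 2 if i must be even and n is odd.  The same Euler
   product for |mu| is bounded by exp 2, so the double series converges absolutely and letting the
   set of primes exhaust all primes gives r(n) S.  If 4 | n then 2 | i is automatic, since j is
   squarefree. *)

lemma prod_prime_powers_multiplicity_nat:
  fixes i :: nat
  assumes "finite P" "\<And>p. p \<in> P \<Longrightarrow> prime p" "i > 0" "prime_factors i \<subseteq> P"
  shows "(\<Prod>p\<in>P. p ^ multiplicity p i) = i"
proof -
  have "(\<Prod>p\<in>P. p ^ multiplicity p i) = (\<Prod>p\<in>prime_factors i. p ^ multiplicity p i)"
    using assms by (intro prod.mono_neutral_right) (auto simp: prime_factors_multiplicity)
  also have "\<dots> = i"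
    using prime_factorization_nat[OF \<open>i > 0\<close>] by simp
  finally show ?thesis .
qed

lemma prime_factors_prod_prime_powers_subset:
  assumes "finite P" "\<And>p. p \<in> P \<Longrightarrow> prime p"
  shows "prime_factors (\<Prod>p\<in>P. p ^ f p) \<subseteq> (P :: nat set)"
proof
  fix q assume "q \<in> prime_factors (\<Prod>p\<in>P. p ^ f p)"
  then have "prime q" "multiplicity q (\<Prod>p\<in>P. p ^ f p) > 0"
    by (auto simp: prime_factors_multiplicity)
  with multiplicity_prod_prime_powers[OF assms] show "q \<in> P"
    by (auto split: if_splits)
qed

lemma prime_factors_subset_primes_le:
  fixes i :: nat
  assumes "0 < i" "i \<le> N"
  shows "prime_factors i \<subseteq> {p. prime p \<and> p \<le> N}"
  using assms by (auto simp: in_prime_factors_iff) (meson dvd_imp_le le_trans)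

lemma dvd_iff_multiplicity_le_on:
  fixes x y :: "'a :: factorial_semiring"
  assumes "x \<noteq> 0" "y \<noteq> 0" "prime_factors x \<subseteq> P"
  shows "x dvd y \<longleftrightarrow> (\<forall>p\<in>P. multiplicity p x \<le> multiplicity p y)"
proof
  assume "x dvd y"
  with assms(2) show "\<forall>p\<in>P. multiplicity p x \<le> multiplicity p y"
    by (auto intro: dvd_imp_multiplicity_le)
next
  assume le: "\<forall>p\<in>P. multiplicity p x \<le> multiplicity p y"
  show "x dvd y"
  proof (rule multiplicity_le_imp_dvd[OF assms(1)])
    fix p :: 'a assume "prime p"
    with le assms(3) show "multiplicity p x \<le> multiplicity p y"
      by (cases "p \<in> P") (auto simp: prime_factors_multiplicity)
  qed
qed

lemma squarefree_iff_multiplicity_le_on: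
  fixes x :: "'a :: factorial_semiring"
  assumes "x \<noteq> 0" "prime_factors x \<subseteq> P" "\<And>p. p \<in> P \<Longrightarrow> prime p"
  shows "squarefree x \<longleftrightarrow> (\<forall>p\<in>P. multiplicity p x \<le> 1)"
  unfolding squarefree_factorial_semiring''[OF assms(1)]
  using assms(2,3) by (force simp: prime_factors_multiplicity)

lemma power_card_prime_factors_squarefree:
  fixes j :: nat
  assumes "finite P" "\<And>p. p \<in> P \<Longrightarrow> prime p" "squarefree j" "prime_factors j \<subseteq> P"
  shows "s ^ card (prime_factors j) = (\<Prod>p\<in>P. s ^ multiplicity p j)"
proof -
  have "j \<noteq> 0"
    using assms(3) by (metis not_squarefree_0)
  have "(\<Prod>p\<in>P. s ^ multiplicity p j) = (\<Prod>p\<in>prime_factors j. s ^ multiplicity p j)"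
    using assms by (intro prod.mono_neutral_right) (auto simp: prime_factors_multiplicity)
  also have "\<dots> = (\<Prod>p\<in>prime_factors j. s)"
    using assms(3) squarefree_factorial_semiring'[OF \<open>j \<noteq> 0\<close>] by simp
  finally show ?thesis
    by simp
qed

lemma totient_prod_prime_powers:
  assumes "finite P" "\<And>p. p \<in> P \<Longrightarrow> prime p"
  shows "totient (\<Prod>p\<in>P. p ^ f p) = (\<Prod>p\<in>P. totient (p ^ f p))"
  using assms
proof (induction P rule: finite_induct)
  case (insert q P)
  have "coprime (q ^ f q) (\<Prod>p\<in>P. p ^ f p)"
  proof (rule prod_coprime_right)
    fix p assume "p \<in> P"
    with insert have "coprime q p" by (intro primes_coprime) auto
    then show "coprime (q ^ f q) (p ^ f p)" by simp
  qed
  with insert show ?case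
    by (simp add: totient_mult_coprime)
qed simp

lemma real_totient_prime_power_Suc:
  assumes "prime p"
  shows "real (totient (p ^ Suc a)) = real p ^ a * (real p - 1)"
  using totient_prime_power_Suc[OF assms, of a] prime_gt_0_nat[OF assms] by (simp add: of_nat_diff)

lemma multiplicity_of_nat_int:
  assumes "prime p" "n > 0"
  shows "multiplicity (int p) (int n) = multiplicity p n"
proof (rule multiplicity_eqI)
  show "int p ^ multiplicity p n dvd int n"
    by (metis multiplicity_dvd of_nat_dvd_iff of_nat_power)
  have "\<not> p ^ Suc (multiplicity p n) dvd n"
    using power_dvd_iff_le_multiplicity[of n p "Suc (multiplicity p n)"] assms prime_gt_1_nat[OF assms(1)]
    by auto
  then show "\<not> int p ^ Suc (multiplicity p n) dvd int n"
    by (metis of_nat_dvd_iff of_nat_power)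
qed

lemma prime_factors_of_nat_int: "prime_factors (int n) = int ` prime_factors n"
proof safe
  fix q assume "q \<in> prime_factors (int n)"
  then have "prime q" "q dvd int n" "n \<noteq> 0"
    by (auto simp: in_prime_factors_iff)
  moreover obtain p where "q = int p"
    using prime_ge_0_int[OF \<open>prime q\<close>] nonneg_int_cases by blast
  ultimately show "q \<in> int ` prime_factors n"
    by (auto simp: in_prime_factors_iff)
qed (auto simp: in_prime_factors_iff)

section \<open>Euler products over pairs\<close>

definition supported_pairs :: "nat set \<Rightarrow> (nat \<times> nat) set" where
  "supported_pairs P = {(i, j). 0 < i \<and> 0 < j \<and> prime_factors i \<subseteq> P \<and> prime_factors j \<subseteq> P}"

lemma bij_betw_supported_pairs_exponents:
  assumes P: "finite P" "\<And>p. p \<in> P \<Longrightarrow> prime p"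
  shows "bij_betw (\<lambda>(i, j). restrict (\<lambda>p. (multiplicity p i, multiplicity p j)) P)
           (supported_pairs P) (PiE P (\<lambda>_. UNIV))"
proof -
  let ?exps = "\<lambda>(i, j). restrict (\<lambda>p. (multiplicity p i, multiplicity p j)) P"
  let ?pair = "\<lambda>x. (\<Prod>p\<in>P. p ^ fst (x p), \<Prod>p\<in>P. p ^ snd (x p))"
  have "bij_betw ?exps (supported_pairs P) (PiE P (\<lambda>_. UNIV))"
  proof (rule bij_betw_byWitness[where f' = ?pair])
    show "\<forall>ij\<in>supported_pairs P. ?pair (?exps ij) = ij"
      using prod_prime_powers_multiplicity_nat[OF P] by (auto simp: supported_pairs_def)
    show "\<forall>x\<in>PiE P (\<lambda>_. UNIV). ?exps (?pair x) = x"
    proof (intro ballI ext)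
      fix x :: "nat \<Rightarrow> nat \<times> nat" and q assume x: "x \<in> PiE P (\<lambda>_. UNIV)"
      show "?exps (?pair x) q = x q"
      proof (cases "q \<in> P")
        case True
        then show ?thesis
          using multiplicity_prod_prime_powers[OF P P(2)[OF True]] by simp
      next
        case False
        then show ?thesis
          using PiE_arb[OF x False] by simp
      qed
    qed
    show "?pair ` PiE P (\<lambda>_. UNIV) \<subseteq> supported_pairs P"
      using P(2) by (auto simp: supported_pairs_def prime_gt_0_nat
          intro!: prod_pos prime_factors_prod_prime_powers_subset[OF P, THEN subsetD])
  qed auto
  then show ?thesis .
qed

lemma has_sum_euler_product_pairs:
  fixes g :: "nat \<Rightarrow> nat \<times> nat \<Rightarrow> 'a :: {real_normed_field, banach, second_countable_topology}"
  assumes P: "finite P" "\<And>p. p \<in> P \<Longrightarrow> prime p"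
    and g: "\<And>p. p \<in> P \<Longrightarrow> (\<lambda>x. norm (g p x)) summable_on UNIV"
  shows "((\<lambda>(i, j). \<Prod>p\<in>P. g p (multiplicity p i, multiplicity p j)) has_sum
           (\<Prod>p\<in>P. infsum (g p) UNIV)) (supported_pairs P)"
proof -
  let ?G = "\<lambda>x. \<Prod>p\<in>P. g p (x p)"
  have "(\<lambda>x. norm (?G x)) summable_on PiE P (\<lambda>_. UNIV)"
    unfolding abs_summable_equivalent
    by (rule abs_summable_on_prod_PiE) (use P g in \<open>simp_all add: abs_summable_equivalent\<close>)
  then have summable: "?G summable_on PiE P (\<lambda>_. UNIV)"
    by (rule abs_summable_summable)
  have "infsum ?G (PiE P (\<lambda>_. UNIV)) = (\<Prod>p\<in>P. infsum (g p) UNIV)"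
    using g by (intro infsum_prod_PiE_abs[OF P(1)]) simp
  with has_sum_infsum[OF summable]
  have "(?G has_sum (\<Prod>p\<in>P. infsum (g p) UNIV)) (PiE P (\<lambda>_. UNIV))"
    by (simp only:)
  moreover have "?G ((\<lambda>(i, j). restrict (\<lambda>p. (multiplicity p i, multiplicity p j)) P) ij)
      = (\<lambda>(i, j). \<Prod>p\<in>P. g p (multiplicity p i, multiplicity p j)) ij" for ij
    by (cases ij) (auto intro!: prod.cong)
  ultimately show ?thesis
    using has_sum_reindex_bij_betw[OF bij_betw_supported_pairs_exponents[OF P], of ?G] by simp
qed

lemma eventually_subset_supported_pairs:
  assumes "finite K" "K \<subseteq> {(i, j). 0 < i \<and> 0 < j}"
  shows "eventually (\<lambda>N. K \<subseteq> supported_pairs {p. prime p \<and> p \<le> N}) sequentially"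
proof (rule eventually_sequentiallyI)
  fix N assume N: "Max (insert 0 (fst ` K \<union> snd ` K)) \<le> N"
  show "K \<subseteq> supported_pairs {p. prime p \<and> p \<le> N}"
  proof safe
    fix i j assume ij: "(i, j) \<in> K"
    then have "i \<le> N" "j \<le> N"
      using assms(1) N by (auto intro: order.trans[OF Max_ge] simp: rev_image_eqI)
    with ij assms(2) show "(i, j) \<in> supported_pairs {p. prime p \<and> p \<le> N}"
      by (auto simp: supported_pairs_def dest!: prime_factors_subset_primes_le)
  qed
qed

section \<open>Sums over exhausting families of sets\<close>

lemma infsum_subset_add_Diff:
  fixes f :: "'a \<Rightarrow> 'b::banach"
  assumes "f summable_on D" "B \<subseteq> D"
  shows "infsum f D = infsum f B + infsum f (D - B)"
proof -
  have "infsum f D = infsum f (B \<union> (D - B))"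
    using assms(2) by (simp add: Un_absorb1)
  also have "\<dots> = infsum f B + infsum f (D - B)"
    using assms by (intro infsum_Un_disjoint summable_on_subset_banach[OF assms(1)]) auto
  finally show ?thesis .
qed

lemma tendsto_infsum_exhaustion:
  fixes f :: "'a \<Rightarrow> 'b::banach"
  assumes f: "(\<lambda>x. norm (f x)) summable_on D"
    and sub: "\<And>N. A N \<subseteq> D"
    and exhaust: "\<And>K. finite K \<Longrightarrow> K \<subseteq> D \<Longrightarrow> eventually (\<lambda>N. K \<subseteq> A N) F"
  shows "((\<lambda>N. infsum f (A N)) \<longlongrightarrow> infsum f D) F"
proof (rule tendstoI)
  fix \<epsilon> :: real assume "\<epsilon> > 0"
  obtain K where K: "finite K" "K \<subseteq> D"
    and approx: "dist (sum (\<lambda>x. norm (f x)) K) (infsum (\<lambda>x. norm (f x)) D) \<le> \<epsilon> / 2"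
    using infsum_finite_approximation[OF f, of "\<epsilon> / 2"] \<open>\<epsilon> > 0\<close> by auto
  have "infsum (\<lambda>x. norm (f x)) D = sum (\<lambda>x. norm (f x)) K + infsum (\<lambda>x. norm (f x)) (D - K)"
    using infsum_subset_add_Diff[OF f K(2)] K(1) by simp
  with approx have tail: "infsum (\<lambda>x. norm (f x)) (D - K) \<le> \<epsilon> / 2"
    by (simp add: dist_real_def)
  have "dist (infsum f (A N)) (infsum f D) < \<epsilon>" if KA: "K \<subseteq> A N" for N
  proof -
    have f_summable: "f summable_on D"
      using f by (rule abs_summable_summable)
    have "dist (infsum f (A N)) (infsum f D) = norm (infsum f (D - A N))"
      using infsum_subset_add_Diff[OF f_summable sub[of N]] by (simp add: dist_norm norm_minus_commute)
    also have "\<dots> \<le> infsum (\<lambda>x. norm (f x)) (D - A N)"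
      by (intro norm_infsum_bound summable_on_subset_banach[OF f]) auto
    also have "\<dots> \<le> infsum (\<lambda>x. norm (f x)) (D - K)"
      using KA by (intro infsum_mono_neutral summable_on_subset_banach[OF f]) auto
    finally show ?thesis
      using tail \<open>\<epsilon> > 0\<close> by simp
  qed
  with exhaust[OF K] show "eventually (\<lambda>N. dist (infsum f (A N)) (infsum f D) < \<epsilon>) F"
    by (auto elim: eventually_mono)
qed

lemma nonneg_summable_on_exhaustion:
  fixes f :: "'a \<Rightarrow> real"
  assumes nonneg: "\<And>x. x \<in> D \<Longrightarrow> 0 \<le> f x"
    and sub: "\<And>N. A N \<subseteq> D"
    and summable: "\<And>N. f summable_on A N"
    and bound: "\<And>N. infsum f (A N) \<le> B"
    and exhaust: "\<And>K. finite K \<Longrightarrow> K \<subseteq> D \<Longrightarrow> eventually (\<lambda>N. K \<subseteq> A N) F"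
    and "F \<noteq> bot"
  shows "f summable_on D"
proof (rule nonneg_bdd_above_summable_on[OF nonneg])
  show "bdd_above (sum f ` {K. K \<subseteq> D \<and> finite K})"
  proof (rule bdd_aboveI2)
    fix K assume K: "K \<in> {K. K \<subseteq> D \<and> finite K}"
    then obtain N where KA: "K \<subseteq> A N"
      using eventually_happens'[OF \<open>F \<noteq> bot\<close> exhaust] by blast
    have "sum f K = infsum f K"
      using K by simp
    also have "\<dots> \<le> infsum f (A N)"
      using K KA sub nonneg by (intro infsum_mono_neutral summable) auto
    also have "\<dots> \<le> B"
      by (rule bound)
    finally show "sum f K \<le> B" .
  qed
qed

lemma LIMSEQ_prod_primes_le:
  fixes f :: "nat \<Rightarrow> 'a :: real_normed_field"
  assumes "convergent_prod (\<lambda>p. if prime p then f p else 1)"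
  shows "(\<lambda>N. \<Prod>p\<in>{p. prime p \<and> p \<le> N}. f p) \<longlonglongrightarrow> (\<Prod>p. if prime p then f p else 1)"
proof -
  have "(\<Prod>p\<le>N. if prime p then f p else 1) = (\<Prod>p\<in>{p. prime p \<and> p \<le> N}. f p)" for N
    by (subst prod.inter_filter[symmetric]) (auto intro: prod.cong)
  with convergent_prod_LIMSEQ[OF assms] show ?thesis
    by simp
qed

lemma convergent_prod_S_const_factors:
  "convergent_prod (\<lambda>p. if prime p then 1 - real p / (real p ^ 3 - 1) else 1)"
proof -
  define z where "z p = (if prime p then - (real p / (real p ^ 3 - 1)) else 0)" for p :: nat
  have small: "\<bar>z p\<bar> \<le> 2 * inverse (real p ^ 2) \<and> \<bar>z p\<bar> < 1" for p
  proof (cases "prime p")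
    case True
    then have "real p \<ge> 2"
      using prime_ge_2_nat by simp
    then have "real p ^ 2 \<ge> 2 ^ 2"
      by (intro power_mono) auto
    then have "real p ^ 3 \<ge> 4 * real p"
      unfolding power3_eq_cube power2_eq_square using \<open>real p \<ge> 2\<close> by (intro mult_right_mono) auto
    moreover have "real p * real p ^ 2 = real p ^ 3"
      by (simp add: power2_eq_square power3_eq_cube)
    ultimately show ?thesis
      using True \<open>real p \<ge> 2\<close> \<open>real p ^ 2 \<ge> 2 ^ 2\<close> by (simp add: z_def divide_simps)
  qed (simp add: z_def)
  have "summable (\<lambda>p. \<bar>z p\<bar>)"
    by (rule summable_comparison_test'[where g = "\<lambda>p. 2 * inverse (real p ^ 2)"])
      (use small inverse_power_summable[of 2, where 'a = real] in \<open>auto intro: summable_mult\<close>)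
  moreover have "z p \<noteq> -1" for p
    using small[of p] by auto
  ultimately have "convergent_prod (\<lambda>p. 1 + z p)"
    by (rule summable_imp_convergent_prod_real)
  moreover have "(\<lambda>p. 1 + z p) = (\<lambda>p. if prime p then 1 - real p / (real p ^ 3 - 1) else 1)"
    by (auto simp: z_def)
  ultimately show ?thesis
    by simp
qed

lemma S_const_LIMSEQ:
  "(\<lambda>N. \<Prod>p\<in>{p. prime p \<and> p \<le> N}. 1 - real p / (real p ^ 3 - 1)) \<longlonglongrightarrow> S_const"
  unfolding S_const_def by (rule LIMSEQ_prod_primes_le[OF convergent_prod_S_const_factors])

lemma r_fun_of_nat:
  assumes "n > 0"
  shows "r_fun (int n) = (\<Prod>p\<in>prime_factors n.
           - (real p ^ 4 / real p ^ (3 * multiplicity p n)) / (real p ^ 3 - real p - 1))"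
proof -
  have powi_eq: "real p powi (4 - 3 * int (multiplicity (int p) (int n)))
      = real p ^ 4 / real p ^ (3 * multiplicity p n)" if "p \<in> prime_factors n" for p
  proof -
    have "prime p"
      using that by auto
    then have "real p \<noteq> 0"
      using prime_gt_0_nat by simp
    then have "real p powi (4 - int (3 * multiplicity p n))
        = real p powi 4 / real p powi int (3 * multiplicity p n)"
      by (intro power_int_diff) simp
    then have "real p powi (4 - int (3 * multiplicity p n)) = real p ^ 4 / real p ^ (3 * multiplicity p n)"
      by (simp only: power_int_of_nat power_int_numeral)
    then show ?thesis
      using multiplicity_of_nat_int[OF \<open>prime p\<close> assms] by simp
  qed
  have "r_fun (int n) = (\<Prod>p\<in>prime_factors n.
      - (real p powi (4 - 3 * int (multiplicity (int p) (int n)))) / (real p ^ 3 - real p - 1))"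
    unfolding r_fun_def prime_factors_of_nat_int by (subst prod.reindex) (auto simp: inj_on_def)
  also have "\<dots> = (\<Prod>p\<in>prime_factors n.
      - (real p ^ 4 / real p ^ (3 * multiplicity p n)) / (real p ^ 3 - real p - 1))"
    by (rule prod.cong) (simp_all add: powi_eq)
  finally show ?thesis .
qed

section \<open>Local factors\<close>

lemma has_sum_geometric_from:
  fixes z :: "'a :: {real_normed_field, banach}"
  assumes "norm z < 1"
  shows "((\<lambda>n. z ^ n) has_sum (z ^ k / (1 - z))) {k..}"
proof -
  have "((\<lambda>n. z ^ n) has_sum (1 / (1 - z))) UNIV"
    using assms by (intro norm_summable_imp_has_sum geometric_sums)
      (simp_all add: norm_power summable_geometric)
  then have "((\<lambda>n. z ^ k * z ^ n) has_sum (z ^ k * (1 / (1 - z)))) UNIV"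
    by (rule has_sum_cmult_right)
  moreover have "((\<lambda>n. z ^ k * z ^ n) has_sum (z ^ k * (1 / (1 - z)))) UNIV \<longleftrightarrow> ?thesis"
    by (intro has_sum_reindex_bij_witness[of _ "\<lambda>n. n - k" "\<lambda>n. n + k"]) (auto simp: power_add)
  ultimately show ?thesis
    by blast
qed

(* The p-factor of the summand at exponents a = ord_p i, b = ord_p j, where e = ord_p n and c demands
   p | i; the sign s enters once for each prime of the squarefree j. *)
definition local_term :: "real \<Rightarrow> bool \<Rightarrow> nat \<Rightarrow> nat \<Rightarrow> nat \<times> nat \<Rightarrow> real" where
  "local_term s c e p = (\<lambda>(a, b).
     if (c \<longrightarrow> 1 \<le> a) \<and> e \<le> a + b \<and> b \<le> 1
     then s ^ b / (real p ^ (2 * a + b) * real (totient (p ^ (a + b)))) else 0)"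

lemma local_term_Suc_0:
  assumes "prime p"
  shows "local_term s c e p (Suc a, 0) =
           (if e \<le> Suc a then real p / (real p - 1) * (1 / real p ^ 3) ^ Suc a else 0)"
proof -
  have "2 * Suc a + a + 1 = 3 * Suc a"
    by simp
  then have "(real p ^ 3) ^ Suc a = real p ^ (2 * Suc a) * real p ^ a * real p"
    by (metis power_add power_mult power_one_right)
  moreover have "real p > 1"
    using prime_gt_1_nat[OF assms] by simp
  ultimately have "1 / (real p ^ (2 * Suc a) * real (totient (p ^ Suc a)))
      = real p / (real p - 1) * (1 / real p ^ 3) ^ Suc a"
    unfolding real_totient_prime_power_Suc[OF assms] power_one_over by simp
  then show ?thesis
    by (simp add: local_term_def)
qed

lemma local_term_1:
  assumes "prime p"
  shows "local_term s c e p (a, 1) =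
           (if (c \<longrightarrow> 1 \<le> a) \<and> e \<le> a + 1
            then s / (real p * (real p - 1)) * (1 / real p ^ 3) ^ a else 0)"
proof -
  have "2 * a + 1 + a = 1 + 3 * a"
    by simp
  then have "real p * (real p ^ 3) ^ a = real p ^ (2 * a + 1) * real p ^ a"
    by (metis power_add power_mult power_one_right)
  then have "s / (real p ^ (2 * a + 1) * real (totient (p ^ Suc a)))
      = s / (real p * (real p - 1)) * (1 / real p ^ 3) ^ a"
    unfolding real_totient_prime_power_Suc[OF assms] power_one_over by (auto simp: ac_simps)
  then show ?thesis
    by (simp add: local_term_def)
qed

lemma has_sum_local_term:
  assumes p: "prime p"
  defines "x \<equiv> 1 / real p ^ 3"
  shows "(local_term s c e p has_sum
           ((if \<not> c \<and> e = 0 then 1 else 0)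
            + (real p * x ^ (e - 1) + s * real p ^ 2 * x ^ max (e - 1) (of_bool c))
              / ((real p - 1) * (real p ^ 3 - 1)))) UNIV"
proof -
  let ?f = "local_term s c e p"
  define k0 where "k0 = max e 1"
  define k1 where "k1 = max (e - 1) (of_bool c)"
  have x: "norm x < 1"
    using prime_gt_1_nat[OF p] by (simp add: x_def)
  (* The support is the origin and the rays b = 0, a \<ge> k0 and b = 1, a \<ge> k1, geometric in x. *)
  have origin: "(?f has_sum (if \<not> c \<and> e = 0 then 1 else 0)) {(0, 0)}"
    by (rule has_sum_finiteI) (auto simp: local_term_def)
  have "?f (a, 0) = real p / (real p - 1) * x ^ a" if "a \<in> {k0..}" for a
    using that local_term_Suc_0[OF p, of s c e "a - 1"] by (simp add: k0_def x_def)
  moreover have "((\<lambda>a. real p / (real p - 1) * x ^ a) has_sum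
      (real p / (real p - 1) * (x ^ k0 / (1 - x)))) {k0..}"
    by (intro has_sum_cmult_right has_sum_geometric_from x)
  ultimately have "((?f \<circ> (\<lambda>a. (a, 0))) has_sum (real p / (real p - 1) * (x ^ k0 / (1 - x)))) {k0..}"
    by (subst has_sum_cong) auto
  then have b0: "(?f has_sum (real p / (real p - 1) * (x ^ k0 / (1 - x)))) ((\<lambda>a. (a, 0)) ` {k0..})"
    by (subst has_sum_reindex) (auto simp: inj_on_def)
  have "?f (a, 1) = s / (real p * (real p - 1)) * x ^ a" if "a \<in> {k1..}" for a
    using that local_term_1[OF p, of s c e a] by (auto simp: k1_def x_def)
  moreover have "((\<lambda>a. s / (real p * (real p - 1)) * x ^ a) has_sum
      (s / (real p * (real p - 1)) * (x ^ k1 / (1 - x)))) {k1..}"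
    by (intro has_sum_cmult_right has_sum_geometric_from x)
  ultimately have "((?f \<circ> (\<lambda>a. (a, 1))) has_sum (s / (real p * (real p - 1)) * (x ^ k1 / (1 - x)))) {k1..}"
    by (subst has_sum_cong) auto
  then have b1: "(?f has_sum (s / (real p * (real p - 1)) * (x ^ k1 / (1 - x)))) ((\<lambda>a. (a, 1)) ` {k1..})"
    by (subst has_sum_reindex) (auto simp: inj_on_def)
  have union: "(?f has_sum ((if \<not> c \<and> e = 0 then 1 else 0)
            + real p / (real p - 1) * (x ^ k0 / (1 - x))
            + s / (real p * (real p - 1)) * (x ^ k1 / (1 - x))))
          ({(0, 0)} \<union> (\<lambda>a. (a, 0)) ` {k0..} \<union> (\<lambda>a. (a, 1)) ` {k1..})"
    by (intro has_sum_Un_disjoint origin b0 b1) (auto simp: k0_def)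
  have support: "(a, b) \<in> {(0, 0)} \<union> (\<lambda>a. (a, 0)) ` {k0..} \<union> (\<lambda>a. (a, 1)) ` {k1..}"
    if "?f (a, b) \<noteq> 0" for a b
  proof -
    from that have "(c \<longrightarrow> 1 \<le> a) \<and> e \<le> a + b \<and> b \<le> 1"
      by (auto simp: local_term_def split: if_splits)
    then consider "a = 0" "b = 0" | "k0 \<le> a" "b = 0" | "k1 \<le> a" "b = 1"
      unfolding k0_def k1_def by (cases b) (auto, linarith)
    then show ?thesis
      by cases auto
  qed
  have "real p / (real p - 1) * (x ^ k0 / (1 - x)) + s / (real p * (real p - 1)) * (x ^ k1 / (1 - x))
      = (real p * x ^ (e - 1) + s * real p ^ 2 * x ^ k1) / ((real p - 1) * (real p ^ 3 - 1))"
  proof -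
    have "k0 = Suc (e - 1)"
      by (simp add: k0_def)
    then have "x ^ k0 = x * x ^ (e - 1)"
      by simp
    moreover have "real p > 1" "real p ^ 3 > 1"
      using prime_gt_1_nat[OF p] by (simp_all add: power_gt1_lemma)
    ultimately show ?thesis
      by (simp add: x_def divide_simps) (simp add: power3_eq_cube power2_eq_square algebra_simps)
  qed
  moreover have "(?f has_sum ((if \<not> c \<and> e = 0 then 1 else 0)
            + real p / (real p - 1) * (x ^ k0 / (1 - x))
            + s / (real p * (real p - 1)) * (x ^ k1 / (1 - x)))) UNIV"
    by (rule has_sum_cong_neutral[THEN iffD1, OF _ _ _ union]) (use support in auto)
  ultimately show ?thesis
    unfolding k1_def by (simp add: add.assoc)
qed

lemma local_term_abs_summable:
  assumes "prime p"
  shows "(\<lambda>x. norm (local_term s c e p x)) summable_on UNIV"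
proof -
  have "local_term s c e p summable_on UNIV"
    using has_sum_local_term[OF assms] by (rule has_sum_imp_summable)
  then show ?thesis
    using summable_on_iff_abs_summable_on_real by blast
qed

lemma infsum_local_term_not_dvd:
  assumes "prime p"
  shows "infsum (local_term (-1) False 0 p) UNIV = 1 - real p / (real p ^ 3 - 1)"
proof -
  have "real p > 1" "real p ^ 3 > 1"
    using prime_gt_1_nat[OF assms] by (simp_all add: power_gt1_lemma)
  then have "1 + (real p - real p ^ 2) / ((real p - 1) * (real p ^ 3 - 1)) = 1 - real p / (real p ^ 3 - 1)"
    by (simp add: divide_simps) (simp add: power2_eq_square algebra_simps)
  then show ?thesis
    using infsumI[OF has_sum_local_term[OF assms, of "-1" False 0]] by simp
qed

lemma infsum_local_term_dvd:
  assumes "prime p" "e > 0"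
  shows "infsum (local_term (-1) False e p) UNIV
           = (1 - real p / (real p ^ 3 - 1)) * (- (real p ^ 4 / real p ^ (3 * e)) / (real p ^ 3 - real p - 1))"
proof -
  obtain m where e: "e = Suc m"
    using assms(2) gr0_implies_Suc by blast
  have "real p \<ge> 2"
    using prime_ge_2_nat[OF assms(1)] by simp
  then have "real p * real p \<ge> 2 * 2"
    by (intro mult_mono) auto
  then have "real p ^ 3 \<ge> 4 * real p"
    unfolding power3_eq_cube using \<open>real p \<ge> 2\<close> by (intro mult_right_mono) auto
  with \<open>real p \<ge> 2\<close> have "real p - 1 \<noteq> 0" "real p ^ 3 - 1 \<noteq> 0" "real p ^ 3 - real p - 1 \<noteq> 0"
    by auto
  then have "(real p * (1 / real p ^ 3) ^ m - real p ^ 2 * (1 / real p ^ 3) ^ m)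
        / ((real p - 1) * (real p ^ 3 - 1))
      = (1 - real p / (real p ^ 3 - 1)) * (- (real p ^ 4 / (real p ^ 3 * real p ^ (3 * m))) / (real p ^ 3 - real p - 1))"
    using \<open>real p \<ge> 2\<close> by (simp add: power_one_over power_mult divide_simps)
      (simp add: power2_eq_square power3_eq_cube power4_eq_xxxx algebra_simps)
  moreover have "real p ^ (3 * e) = real p ^ 3 * real p ^ (3 * m)"
    by (simp add: e power_add flip: power_Suc)
  ultimately show ?thesis
    using infsumI[OF has_sum_local_term[OF assms(1), of "-1" False e]] by (simp add: e)
qed

lemma infsum_local_term_two_even: "infsum (local_term (-1) True 0 2) UNIV = 3 / 10 * (1 - 2 / (2 ^ 3 - 1))"
  using infsumI[OF has_sum_local_term[OF two_is_prime_nat, of "-1" True 0]] by simp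

lemma infsum_local_term:
  assumes p: "prime p" and n: "n > 0" and ev: "ev \<longrightarrow> odd n"
  shows "infsum (local_term (-1) (ev \<and> p = 2) (multiplicity p n) p) UNIV
           = (1 - real p / (real p ^ 3 - 1))
             * (if p \<in> prime_factors n
                then - (real p ^ 4 / real p ^ (3 * multiplicity p n)) / (real p ^ 3 - real p - 1) else 1)
             * (if ev \<and> p = 2 then 3 / 10 else 1)"
proof (cases "p \<in> prime_factors n")
  case True
  with ev have not_even_two: "(ev \<and> p = 2) = False"
    by auto
  have "multiplicity p n > 0"
    using True by (simp add: prime_factors_multiplicity)
  then show ?thesis
    unfolding not_even_two using infsum_local_term_dvd[OF p] True by simp
next
  case False
  then have "multiplicity p n = 0"
    using p n by (simp add: prime_factors_multiplicity)
  then show ?thesis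
    using infsum_local_term_not_dvd[OF p] infsum_local_term_two_even False by auto
qed

lemma infsum_local_term_unsigned_le:
  assumes "prime p"
  shows "infsum (local_term 1 False 0 p) UNIV \<le> 1 + (2 / (real p - 1) - 2 / real p)"
proof -
  have "real p \<ge> 2"
    using prime_ge_2_nat[OF assms] by simp
  then have "real p * real p \<ge> 2 * 2"
    by (intro mult_mono) auto
  moreover have "real p * real p * 1 \<le> real p * real p * (real p - 1)"
    using \<open>real p \<ge> 2\<close> by (intro mult_left_mono) auto
  ultimately have "real p ^ 3 \<ge> real p ^ 2 + 2"
    unfolding power3_eq_cube power2_eq_square by (simp add: algebra_simps)
  with \<open>real p \<ge> 2\<close> have "(real p + real p ^ 2) / ((real p - 1) * (real p ^ 3 - 1))
      \<le> 2 / (real p - 1) - 2 / real p"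
    by (simp add: divide_simps) (simp add: power2_eq_square power3_eq_cube algebra_simps)
  then show ?thesis
    using infsumI[OF has_sum_local_term[OF assms, of 1 False 0]] by simp
qed

(* s = -1: the summand of S1 n (ev = False) and of S2' n (ev = True); s = 1: its absolute value. *)
definition sum_term :: "real \<Rightarrow> bool \<Rightarrow> nat \<Rightarrow> nat \<times> nat \<Rightarrow> real" where
  "sum_term s ev n = (\<lambda>(i, j).
     if (ev \<longrightarrow> even i) \<and> n dvd i * j \<and> squarefree j
     then s ^ card (prime_factors j) / (real i ^ 2 * real j * real (totient (i * j))) else 0)"

lemma sum_term_euler_factorization:
  assumes P: "finite P" "\<And>p. p \<in> P \<Longrightarrow> prime p"
    and ij: "(i, j) \<in> supported_pairs P"
    and n: "n > 0" "prime_factors n \<subseteq> P"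
    and two: "ev \<longrightarrow> 2 \<in> P"
  shows "sum_term s ev n (i, j) =
           (\<Prod>p\<in>P. local_term s (ev \<and> p = 2) (multiplicity p n) p
                      (multiplicity p i, multiplicity p j))"
proof -
  from ij have i: "i > 0" "prime_factors i \<subseteq> P" and j: "j > 0" "prime_factors j \<subseteq> P"
    by (auto simp: supported_pairs_def)
  define a where "a p = multiplicity p i" for p
  define b where "b p = multiplicity p j" for p
  have mult_ij: "multiplicity p (i * j) = a p + b p" if "p \<in> P" for p
    using P(2)[OF that] i j by (simp add: a_def b_def prime_elem_multiplicity_mult_distrib)
  have "(ev \<longrightarrow> even i) \<longleftrightarrow> (\<forall>p\<in>P. ev \<and> p = 2 \<longrightarrow> 1 \<le> a p)"
    using two i prime_multiplicity_gt_zero_iff[of 2 i] by (auto simp: a_def)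
  moreover have "n dvd i * j \<longleftrightarrow> (\<forall>p\<in>P. multiplicity p n \<le> a p + b p)"
    using dvd_iff_multiplicity_le_on[of n "i * j" P] n i j mult_ij by auto
  moreover have "squarefree j \<longleftrightarrow> (\<forall>p\<in>P. b p \<le> 1)"
    using squarefree_iff_multiplicity_le_on[of j P] P(2) j by (simp add: b_def)
  ultimately have cond: "((ev \<longrightarrow> even i) \<and> n dvd i * j \<and> squarefree j) \<longleftrightarrow>
      (\<forall>p\<in>P. (ev \<and> p = 2 \<longrightarrow> 1 \<le> a p) \<and> multiplicity p n \<le> a p + b p \<and> b p \<le> 1)"
    by blast
  show ?thesis
  proof (cases "(ev \<longrightarrow> even i) \<and> n dvd i * j \<and> squarefree j")
    case False
    with cond obtain q where q: "q \<in> P"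
      and "\<not> ((ev \<and> q = 2 \<longrightarrow> 1 \<le> a q) \<and> multiplicity q n \<le> a q + b q \<and> b q \<le> 1)"
      by blast
    then have "local_term s (ev \<and> q = 2) (multiplicity q n) q (multiplicity q i, multiplicity q j) = 0"
      unfolding local_term_def a_def b_def by (simp only: prod.case if_False)
    with q have "(\<Prod>p\<in>P. local_term s (ev \<and> p = 2) (multiplicity p n) p
        (multiplicity p i, multiplicity p j)) = 0"
      by (intro prod_zero[OF P(1)]) blast
    moreover have "sum_term s ev n (i, j) = 0"
      using False unfolding sum_term_def by (simp only: prod.case if_False)
    ultimately show ?thesis
      by (simp only:)
  next
    case True
    have i_prod: "i = (\<Prod>p\<in>P. p ^ a p)" and j_prod: "j = (\<Prod>p\<in>P. p ^ b p)"
      using prod_prime_powers_multiplicity_nat[OF P] i j by (simp_all add: a_def b_def)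
    have "real i ^ 2 * real j = (\<Prod>p\<in>P. real p ^ (2 * a p + b p))"
      by (subst i_prod, subst j_prod)
        (simp add: power_add power_mult prod.distrib prod_power_distrib[symmetric] mult.commute)
    moreover have "real (totient (i * j)) = (\<Prod>p\<in>P. real (totient (p ^ (a p + b p))))"
    proof -
      have "i * j = (\<Prod>p\<in>P. p ^ (a p + b p))"
        by (subst i_prod, subst j_prod) (simp add: power_add prod.distrib)
      then show ?thesis
        by (simp add: totient_prod_prime_powers[OF P])
    qed
    moreover have "s ^ card (prime_factors j) = (\<Prod>p\<in>P. s ^ b p)"
      using power_card_prime_factors_squarefree[OF P _ j(2)] True by (simp add: b_def)
    ultimately have "sum_term s ev n (i, j) =
        (\<Prod>p\<in>P. s ^ b p / (real p ^ (2 * a p + b p) * real (totient (p ^ (a p + b p)))))"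
      using True by (simp add: sum_term_def prod_dividef prod.distrib)
    also have "\<dots> = (\<Prod>p\<in>P. local_term s (ev \<and> p = 2) (multiplicity p n) p (a p, b p))"
      using True cond by (auto simp: local_term_def intro!: prod.cong)
    finally show ?thesis
      by (simp add: a_def b_def)
  qed
qed

lemma has_sum_sum_term_supported_pairs:
  assumes P: "finite P" "\<And>p. p \<in> P \<Longrightarrow> prime p"
    and n: "n > 0" "prime_factors n \<subseteq> P"
    and two: "ev \<longrightarrow> 2 \<in> P"
  shows "(sum_term s ev n has_sum
           (\<Prod>p\<in>P. infsum (local_term s (ev \<and> p = 2) (multiplicity p n) p) UNIV)) (supported_pairs P)"
proof -
  have "((\<lambda>(i, j). \<Prod>p\<in>P. local_term s (ev \<and> p = 2) (multiplicity p n) p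
            (multiplicity p i, multiplicity p j)) has_sum
         (\<Prod>p\<in>P. infsum (local_term s (ev \<and> p = 2) (multiplicity p n) p) UNIV)) (supported_pairs P)"
    using P by (intro has_sum_euler_product_pairs local_term_abs_summable) auto
  then show ?thesis
    by (rule has_sum_cong[THEN iffD1, rotated])
      (auto simp: sum_term_euler_factorization[OF P _ n two])
qed

lemma infsum_sum_term_unsigned_bounded:
  "infsum (sum_term 1 False 1) (supported_pairs {p. prime p \<and> p \<le> N}) \<le> exp 2"
proof -
  let ?P = "{p. prime p \<and> p \<le> N}"
  have "(sum_term 1 False 1 has_sum
      (\<Prod>p\<in>?P. infsum (local_term 1 (False \<and> p = 2) (multiplicity p 1) p) UNIV)) (supported_pairs ?P)"
    by (rule has_sum_sum_term_supported_pairs) auto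
  then have "(sum_term 1 False 1 has_sum (\<Prod>p\<in>?P. infsum (local_term 1 False 0 p) UNIV)) (supported_pairs ?P)"
    by simp
  then have "infsum (sum_term 1 False 1) (supported_pairs ?P) = (\<Prod>p\<in>?P. infsum (local_term 1 False 0 p) UNIV)"
    by (rule infsumI)
  also have "\<dots> \<le> (\<Prod>p\<in>?P. exp (2 / (real p - 1) - 2 / real p))"
  proof (rule prod_mono)
    fix p assume "p \<in> ?P"
    then have "prime p" by simp
    have "0 \<le> infsum (local_term 1 False 0 p) UNIV"
      by (rule infsum_nonneg) (auto simp: local_term_def)
    moreover have "1 + (2 / (real p - 1) - 2 / real p) \<le> exp (2 / (real p - 1) - 2 / real p)"
      by (rule exp_ge_add_one_self)
    ultimately show "0 \<le> infsum (local_term 1 False 0 p) UNIV \<and>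
        infsum (local_term 1 False 0 p) UNIV \<le> exp (2 / (real p - 1) - 2 / real p)"
      using infsum_local_term_unsigned_le[OF \<open>prime p\<close>] by linarith
  qed
  also have "\<dots> = exp (\<Sum>p\<in>?P. 2 / (real p - 1) - 2 / real p)"
    by (simp add: exp_sum)
  also have "\<dots> \<le> exp 2"
  proof -
    have "0 \<le> 2 / (real k - 1) - 2 / real k" if "k \<ge> 2" for k
      using that by (simp add: divide_left_mono)
    then have "(\<Sum>p\<in>?P. 2 / (real p - 1) - 2 / real p) \<le> (\<Sum>k\<in>{Suc 1..N}. 2 / (real k - 1) - 2 / real k)"
      by (intro sum_mono2) (auto dest: prime_ge_2_nat)
    also have "\<dots> \<le> 2"
    proof (cases "N \<ge> 1")
      case True
      with sum_telescope''[OF True, of "\<lambda>k. - 2 / real k"] show ?thesis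
        by (simp add: of_nat_diff)
    qed simp
    finally show ?thesis
      by simp
  qed
  finally show ?thesis .
qed

lemma sum_term_abs_le:
  assumes "\<bar>s\<bar> \<le> 1"
  shows "\<bar>sum_term s ev n x\<bar> \<le> sum_term 1 False 1 x"
proof -
  have "\<bar>s ^ k\<bar> \<le> 1" for k
    using assms by (simp add: power_abs power_le_one)
  then show ?thesis
    by (cases x) (auto simp: sum_term_def abs_divide divide_right_mono)
qed

lemma sum_term_abs_summable:
  assumes "\<bar>s\<bar> \<le> 1"
  shows "(\<lambda>x. norm (sum_term s ev n x)) summable_on {(i, j). 0 < i \<and> 0 < j}"
proof -
  have summable_primes_le: "sum_term 1 False 1 summable_on supported_pairs {p. prime p \<and> p \<le> N}" for N
    by (rule has_sum_imp_summable, rule has_sum_sum_term_supported_pairs) auto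
  have "sum_term 1 False 1 summable_on {(i, j). 0 < i \<and> 0 < j}"
  proof (rule nonneg_summable_on_exhaustion
      [where A = "\<lambda>N. supported_pairs {p. prime p \<and> p \<le> N}" and F = sequentially])
    show "0 \<le> sum_term 1 False 1 x" for x
      by (auto simp: sum_term_def split: prod.splits)
    show "supported_pairs {p. prime p \<and> p \<le> N} \<subseteq> {(i, j). 0 < i \<and> 0 < j}" for N
      by (auto simp: supported_pairs_def)
    show "infsum (sum_term 1 False 1) (supported_pairs {p. prime p \<and> p \<le> N}) \<le> exp 2" for N
      by (rule infsum_sum_term_unsigned_bounded)
    show "eventually (\<lambda>N. K \<subseteq> supported_pairs {p. prime p \<and> p \<le> N}) sequentially"
      if "finite K" "K \<subseteq> {(i, j). 0 < i \<and> 0 < j}" for K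
      using that by (rule eventually_subset_supported_pairs)
  qed (use summable_primes_le in simp_all)
  then show ?thesis
    by (rule Infinite_Sum.abs_summable_on_comparison_test') (use sum_term_abs_le[OF assms] in auto)
qed

lemma infsum_sum_term_primes_le:
  assumes n: "n > 0" "n \<le> N" and ev: "ev \<longrightarrow> odd n" and "2 \<le> N"
  shows "infsum (sum_term (-1) ev n) (supported_pairs {p. prime p \<and> p \<le> N})
           = (\<Prod>p\<in>{p. prime p \<and> p \<le> N}. 1 - real p / (real p ^ 3 - 1)) * r_fun (int n)
             * (if ev then 3 / 10 else 1)"
proof -
  let ?P = "{p. prime p \<and> p \<le> N}"
  have pf: "prime_factors n \<subseteq> ?P"
    using prime_factors_subset_primes_le[OF n] .
  have two: "2 \<in> ?P"
    using \<open>2 \<le> N\<close> by simp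
  have "infsum (sum_term (-1) ev n) (supported_pairs ?P)
      = (\<Prod>p\<in>?P. infsum (local_term (-1) (ev \<and> p = 2) (multiplicity p n) p) UNIV)"
    by (rule infsumI, rule has_sum_sum_term_supported_pairs) (use n(1) pf two in auto)
  also have "\<dots> = (\<Prod>p\<in>?P. 1 - real p / (real p ^ 3 - 1))
      * (\<Prod>p\<in>?P. if p \<in> prime_factors n
                  then - (real p ^ 4 / real p ^ (3 * multiplicity p n)) / (real p ^ 3 - real p - 1) else 1)
      * (\<Prod>p\<in>?P. if ev \<and> p = 2 then 3 / 10 else 1)"
    using n(1) ev by (simp add: infsum_local_term prod.distrib)
  also have "(\<Prod>p\<in>?P. if p \<in> prime_factors n
                  then - (real p ^ 4 / real p ^ (3 * multiplicity p n)) / (real p ^ 3 - real p - 1) else 1)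
      = r_fun (int n)"
    using pf by (simp add: r_fun_of_nat[OF n(1)] prod.If_cases Int_absorb1)
  also have "(\<Prod>p\<in>?P. if ev \<and> p = 2 then 3 / 10 else 1) = (if ev then 3 / 10 else (1 :: real))"
    using two by (cases ev) (simp_all add: prod.delta)
  finally show ?thesis .
qed

lemma infsum_sum_term:
  assumes "n > 0" "ev \<longrightarrow> odd n"
  shows "infsum (sum_term (-1) ev n) {(i, j). 0 < i \<and> 0 < j}
           = r_fun (int n) * S_const * (if ev then 3 / 10 else 1)"
proof -
  let ?A = "\<lambda>N. supported_pairs {p. prime p \<and> p \<le> N}"
  let ?c = "r_fun (int n) * (if ev then 3 / 10 else 1)"
  have "(\<lambda>N. infsum (sum_term (-1) ev n) (?A N)) \<longlonglongrightarrow> infsum (sum_term (-1) ev n) {(i, j). 0 < i \<and> 0 < j}"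
  proof (rule tendsto_infsum_exhaustion[OF sum_term_abs_summable])
    show "?A N \<subseteq> {(i, j). 0 < i \<and> 0 < j}" for N
      by (auto simp: supported_pairs_def)
  qed (auto intro: eventually_subset_supported_pairs)
  moreover have "(\<lambda>N. infsum (sum_term (-1) ev n) (?A N)) \<longlonglongrightarrow> S_const * ?c"
  proof (rule Lim_transform_eventually)
    show "(\<lambda>N. (\<Prod>p\<in>{p. prime p \<and> p \<le> N}. 1 - real p / (real p ^ 3 - 1)) * ?c)
        \<longlonglongrightarrow> S_const * ?c"
      by (intro tendsto_mult_right S_const_LIMSEQ)
    show "eventually (\<lambda>N. (\<Prod>p\<in>{p. prime p \<and> p \<le> N}. 1 - real p / (real p ^ 3 - 1)) * ?c
        = infsum (sum_term (-1) ev n) (?A N)) sequentially"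
      using eventually_ge_at_top[of "n + 2"]
      by eventually_elim (use assms in \<open>simp add: infsum_sum_term_primes_le mult.assoc\<close>)
  qed
  ultimately show ?thesis
    by (simp add: LIMSEQ_unique mult.assoc mult.left_commute)
qed

lemma double_infsum_eq_infsum_sum_term:
  "(\<Sum>\<^sub>\<infinity>i\<in>{i::nat. i \<ge> 1 \<and> (ev \<longrightarrow> even i)}.
      \<Sum>\<^sub>\<infinity>j\<in>{j::nat. j \<ge> 1 \<and> n dvd i * j}.
        real_of_int (moebius_mu j) / (real i ^ 2 * real j * real (totient (i * j))))
     = infsum (sum_term (-1) ev n) {(i, j). 0 < i \<and> 0 < j}"
proof -
  define D where "D = Sigma {i::nat. i \<ge> 1 \<and> (ev \<longrightarrow> even i)} (\<lambda>i. {j::nat. j \<ge> 1 \<and> n dvd i * j})"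
  have D_sub: "D \<subseteq> {(i, j). 0 < i \<and> 0 < j}"
    by (auto simp: D_def)
  have "(\<Sum>\<^sub>\<infinity>i\<in>{i::nat. i \<ge> 1 \<and> (ev \<longrightarrow> even i)}.
      \<Sum>\<^sub>\<infinity>j\<in>{j::nat. j \<ge> 1 \<and> n dvd i * j}.
        real_of_int (moebius_mu j) / (real i ^ 2 * real j * real (totient (i * j))))
      = (\<Sum>\<^sub>\<infinity>i\<in>{i::nat. i \<ge> 1 \<and> (ev \<longrightarrow> even i)}.
          \<Sum>\<^sub>\<infinity>j\<in>{j::nat. j \<ge> 1 \<and> n dvd i * j}. sum_term (-1) ev n (i, j))"
    by (intro infsum_cong) (auto simp: sum_term_def moebius_mu_def)
  also have "\<dots> = infsum (sum_term (-1) ev n) D"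
  proof -
    have "sum_term (-1) ev n summable_on D"
      by (rule summable_on_subset_banach[OF abs_summable_summable[OF sum_term_abs_summable] D_sub]) simp
    then show ?thesis
      unfolding D_def by (rule infsum_Sigma_banach)
  qed
  also have "\<dots> = infsum (sum_term (-1) ev n) {(i, j). 0 < i \<and> 0 < j}"
    using D_sub by (intro infsum_cong_neutral) (auto simp: D_def sum_term_def split: if_splits)
  finally show ?thesis .
qed

lemma sum_term_True_eq_False:
  assumes "4 dvd n"
  shows "sum_term s True n = sum_term s False n"
proof -
  have "even i" if "n dvd i * j" "squarefree j" for i j :: nat
  proof (rule ccontr)
    assume "odd i"
    have "2 ^ 2 dvd i * j"
      using assms that(1) by (auto intro: dvd_trans)
    moreover have "coprime (2 ^ 2) i"
      using \<open>odd i\<close> by (simp only: coprime_power_left_iff coprime_left_2_iff_odd simp_thms)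
    ultimately have "2 ^ 2 dvd j"
      by (simp add: coprime_dvd_mult_right_iff)
    with that(2) have "is_unit (2 :: nat)"
      unfolding squarefree_def by blast
    then show False
      by simp
  qed
  then show ?thesis
    by (auto simp: sum_term_def fun_eq_iff)
qed

theorem corollary4p3:
  fixes n :: nat
  assumes "n \<ge> 1"
  shows "S1 n = r_fun (int n) * S_const
         \<and> (odd n \<longrightarrow> S2' n = 3 / 10 * r_fun (int n) * S_const)
         \<and> (4 dvd n \<longrightarrow> S2' n = r_fun (int n) * S_const)"
proof -
  have n: "n > 0"
    using assms by simp
  have S1_eq: "S1 n = infsum (sum_term (-1) False n) {(i, j). 0 < i \<and> 0 < j}"
    using double_infsum_eq_infsum_sum_term[where ev = False] by (simp add: S1_def)
  have S2'_eq: "S2' n = infsum (sum_term (-1) True n) {(i, j). 0 < i \<and> 0 < j}"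
    using double_infsum_eq_infsum_sum_term[where ev = True] by (simp add: S2'_def)
  show ?thesis
    using infsum_sum_term[OF n] sum_term_True_eq_False by (simp add: S1_eq S2'_eq)
qed

end
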